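(* Let $G$ be a graph with no induced $P_7$, $C_4$, $C_6$ or $C_7$, let $H=(B_1,\dots,B_5)$ be a maximal nice blowup of $C_5$ in $G$, and let $i\in\{1,\dots,5\}$. If $xy$ is an edge with $x,y\in A_3(i)$, then $N_{B_i}(x)=N_{B_i}(y)$.
   Context: Indices modulo $5$. A nice blowup of $C_5$ is a tuple $(B_1,\dots,B_5)$ of pairwise disjoint cliques such that every vertex of $B_j$ has a neighbor in $B_{j-1}$ and in $B_{j+1}$, $B_j$ is anticomplete to $B_{j+2}$, and there are no $a\in B_j$, distinct $b,c\in B_{j+1}$, $d\in B_{j+2}$ with $G[\{a,b,c,d\}]\cong P_4$; $V(H)=\bigcup B_j$; maximal means no nice blowup has vertex set strictly containing $V(H)$. For $v\notin V(H)$, $\operatorname{supp}(v)$ is the set of $j$ such that $v$ has a neighbor in $B_j$; $A_3(i)=\{v\notin V(H):\operatorname{supp}(v)=\{i-1,i,i+1\}\}$; $N_S(v)$ is the set of neighbors of $v$ in $S$. *)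

theory Defs
  imports Main
begin

definition graph :: "'a set \<Rightarrow> ('a \<Rightarrow> 'a \<Rightarrow> bool) \<Rightarrow> bool" where
  "graph V E \<longleftrightarrow> finite V \<and> (\<forall>x y. E x y \<longrightarrow> x \<in> V \<and> y \<in> V)
     \<and> (\<forall>x y. E x y \<longrightarrow> E y x) \<and> (\<forall>x. \<not> E x x)"

definition path_adj :: "nat \<Rightarrow> nat \<Rightarrow> bool" where
  "path_adj i j \<longleftrightarrow> i = j + 1 \<or> j = i + 1"

definition cycle_adj :: "nat \<Rightarrow> nat \<Rightarrow> nat \<Rightarrow> bool" where
  "cycle_adj k i j \<longleftrightarrow> j = (i + 1) mod k \<or> i = (j + 1) mod k"

definition has_induced :: "'a set \<Rightarrow> ('a \<Rightarrow> 'a \<Rightarrow> bool) \<Rightarrow> nat \<Rightarrow> (nat \<Rightarrow> nat \<Rightarrow> bool) \<Rightarrow> bool" where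
  "has_induced V E k A \<longleftrightarrow> (\<exists>f. inj_on f {0..<k} \<and> f ` {0..<k} \<subseteq> V \<and>
     (\<forall>i<k. \<forall>j<k. E (f i) (f j) \<longleftrightarrow> A i j))"

definition induces_P4 :: "('a \<Rightarrow> 'a \<Rightarrow> bool) \<Rightarrow> 'a set \<Rightarrow> bool" where
  "induces_P4 E S \<longleftrightarrow> (\<exists>f. bij_betw f {0..<4::nat} S \<and>
     (\<forall>i<4. \<forall>j<4. E (f i) (f j) \<longleftrightarrow> path_adj i j))"

text \<open>Indices of the blowup are 0..4 (paper: 1..5), taken modulo 5.\<close>
definition nxt :: "nat \<Rightarrow> nat" where "nxt j = (j + 1) mod 5"
definition prv :: "nat \<Rightarrow> nat" where "prv j = (j + 4) mod 5"

definition nice_blowup :: "'a set \<Rightarrow> ('a \<Rightarrow> 'a \<Rightarrow> bool) \<Rightarrow> (nat \<Rightarrow> 'a set) \<Rightarrow> bool" where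
  "nice_blowup V E B \<longleftrightarrow>
     (\<forall>j<5. B j \<subseteq> V) \<and>
     (\<forall>j<5. \<forall>x\<in>B j. \<forall>y\<in>B j. x \<noteq> y \<longrightarrow> E x y) \<and>
     (\<forall>j<5. \<forall>k<5. j \<noteq> k \<longrightarrow> B j \<inter> B k = {}) \<and>
     (\<forall>j<5. \<forall>v\<in>B j. (\<exists>u\<in>B (prv j). E v u) \<and> (\<exists>u\<in>B (nxt j). E v u)) \<and>
     (\<forall>j<5. \<forall>x\<in>B j. \<forall>y\<in>B ((j + 2) mod 5). \<not> E x y) \<and>
     (\<forall>j<5. \<not> (\<exists>a\<in>B j. \<exists>b\<in>B (nxt j). \<exists>c\<in>B (nxt j). \<exists>d\<in>B (nxt (nxt j)).
         b \<noteq> c \<and> induces_P4 E {a, b, c, d}))"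

definition blowup_verts :: "(nat \<Rightarrow> 'a set) \<Rightarrow> 'a set" where
  "blowup_verts B = (\<Union>j<5. B j)"

definition maximal_nice_blowup :: "'a set \<Rightarrow> ('a \<Rightarrow> 'a \<Rightarrow> bool) \<Rightarrow> (nat \<Rightarrow> 'a set) \<Rightarrow> bool" where
  "maximal_nice_blowup V E B \<longleftrightarrow> nice_blowup V E B \<and>
     \<not> (\<exists>B'. nice_blowup V E B' \<and> blowup_verts B \<subset> blowup_verts B')"

definition supp :: "('a \<Rightarrow> 'a \<Rightarrow> bool) \<Rightarrow> (nat \<Rightarrow> 'a set) \<Rightarrow> 'a \<Rightarrow> nat set" where
  "supp E B v = {j. j < 5 \<and> (\<exists>u\<in>B j. E v u)}"

definition A3 :: "'a set \<Rightarrow> ('a \<Rightarrow> 'a \<Rightarrow> bool) \<Rightarrow> (nat \<Rightarrow> 'a set) \<Rightarrow> nat \<Rightarrow> 'a set" where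
  "A3 V E B i = {v \<in> V - blowup_verts B. supp E B v = {prv i, i, nxt i}}"

definition nbhd_in :: "('a \<Rightarrow> 'a \<Rightarrow> bool) \<Rightarrow> 'a set \<Rightarrow> 'a \<Rightarrow> 'a set" where
  "nbhd_in E S v = {u \<in> S. E v u}"

end

theory Submission
  imports Defs
begin

text \<open>
  Rotating the indices we may take \<open>i = 0\<close>. Suppose \<open>u \<in> B 0\<close> is adjacent to \<open>x\<close> but not
  to \<open>y\<close>. We show that \<open>x\<close> is then complete to \<open>B 0\<close>; since adding such a vertex to \<open>B 0\<close>
  keeps the blowup nice, this contradicts maximality.

  Suppose \<open>x\<close> misses \<open>z \<in> B 0\<close>. By \<open>C4\<close>-freeness the common neighbours of \<open>x\<close> and \<open>z\<close>
  form a clique, so they cannot meet both \<open>B 1\<close> and \<open>B 4\<close>; by the reflection symmetry of the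
  blowup we may assume they miss \<open>B 1\<close>. Then \<open>C4\<close>-freeness and niceness force \<open>u\<close> to see
  the neighbours of \<open>x\<close> and \<open>z\<close> in \<open>B 1\<close>, \<open>y\<close> and \<open>u\<close> to have a common neighbour in
  \<open>B 1\<close> and hence none in \<open>B 4\<close>, and finally a neighbour of \<open>y\<close> in \<open>B 4\<close> to be adjacent to
  \<open>x\<close> but to neither \<open>u\<close> nor \<open>z\<close>; walking from it through \<open>B 3\<close> and \<open>B 2\<close> produces an
  induced \<open>C6\<close>, a forbidden \<open>P4\<close> or an induced \<open>P7\<close>.

  Adding a vertex \<open>x \<in> A3(0)\<close> complete to \<open>B 0\<close> keeps the blowup nice because an induced
  \<open>P4\<close> through \<open>x\<close> across three consecutive bags would extend, through \<open>B 3\<close>, to an induced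
  \<open>C6\<close> or \<open>C7\<close>.
\<close>

lemma graph_sym: "graph V E \<Longrightarrow> E a b \<Longrightarrow> E b a"
  and graph_irrefl: "graph V E \<Longrightarrow> \<not> E a a"
  and graph_edge_in_V: "graph V E \<Longrightarrow> E a b \<Longrightarrow> a \<in> V"
  by (auto simp: graph_def)

lemma has_induced_of_list:
  assumes "distinct xs" "set xs \<subseteq> V"
    and "\<And>i j. i < length xs \<Longrightarrow> j < length xs \<Longrightarrow> E (xs ! i) (xs ! j) \<longleftrightarrow> A i j"
  shows "has_induced V E (length xs) A"
  unfolding has_induced_def
proof (intro exI[of _ "nth xs"] conjI)
  show "inj_on (nth xs) {0..<length xs}"
    using assms(1) by (simp add: inj_on_nth)
  show "nth xs ` {0..<length xs} \<subseteq> V"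
    using assms(2) nth_mem by fastforce
qed (use assms(3) in simp)

lemma less_4_cases: "(i::nat) < 4 \<longleftrightarrow> i = 0 \<or> i = 1 \<or> i = 2 \<or> i = 3"
  and less_5_cases: "(i::nat) < 5 \<longleftrightarrow> i = 0 \<or> i = 1 \<or> i = 2 \<or> i = 3 \<or> i = 4"
  and less_6_cases: "(i::nat) < 6 \<longleftrightarrow> i = 0 \<or> i = 1 \<or> i = 2 \<or> i = 3 \<or> i = 4 \<or> i = 5"
  and less_7_cases: "(i::nat) < 7 \<longleftrightarrow> i = 0 \<or> i = 1 \<or> i = 2 \<or> i = 3 \<or> i = 4 \<or> i = 5 \<or> i = 6"
  by auto

text \<open>For the longer cycles and for \<open>P7\<close> the adjacency pattern already forces the vertices to be
  distinct; for \<open>C4\<close> the two diagonals have to be assumed distinct.\<close>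

lemma induced_C4I:
  assumes G: "graph V E"
    and "E p0 p1" "E p1 p2" "E p2 p3" "E p3 p0" and "\<not> E p0 p2" "\<not> E p1 p3"
    and "p0 \<noteq> p2" "p1 \<noteq> p3"
  shows "has_induced V E 4 (cycle_adj 4)"
proof -
  note E_sym = graph_sym[OF G] and irr = graph_irrefl[OF G]
  have nE_sym: "\<not> E a b \<Longrightarrow> \<not> E b a" for a b using E_sym by blast
  have "has_induced V E (length [p0, p1, p2, p3]) (cycle_adj 4)"
  proof (rule has_induced_of_list)
    show "distinct [p0, p1, p2, p3]"
      using assms(2-) irr by (auto dest: E_sym)
    show "set [p0, p1, p2, p3] \<subseteq> V"
      using assms(2-5) graph_edge_in_V[OF G] by auto
    fix i j assume "i < length [p0, p1, p2, p3]" "j < length [p0, p1, p2, p3]"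
    then have "i < 4" "j < 4" by simp_all
    then show "E ([p0, p1, p2, p3] ! i) ([p0, p1, p2, p3] ! j) \<longleftrightarrow> cycle_adj 4 i j"
      using assms(2-7) assms(2-5)[THEN E_sym] assms(6,7)[THEN nE_sym] irr
      unfolding less_4_cases by (elim disjE) (simp_all add: cycle_adj_def)
  qed
  then show ?thesis by (simp add: eval_nat_numeral)
qed

lemma induced_C6I:
  assumes G: "graph V E"
    and "E p0 p1" "E p1 p2" "E p2 p3" "E p3 p4" "E p4 p5" "E p5 p0"
    and "\<not> E p0 p2" "\<not> E p0 p3" "\<not> E p0 p4" "\<not> E p1 p3" "\<not> E p1 p4" "\<not> E p1 p5"
      "\<not> E p2 p4" "\<not> E p2 p5" "\<not> E p3 p5"
  shows "has_induced V E 6 (cycle_adj 6)"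
proof -
  note E_sym = graph_sym[OF G] and irr = graph_irrefl[OF G]
  have nE_sym: "\<not> E a b \<Longrightarrow> \<not> E b a" for a b using E_sym by blast
  have "has_induced V E (length [p0, p1, p2, p3, p4, p5]) (cycle_adj 6)"
  proof (rule has_induced_of_list)
    show "distinct [p0, p1, p2, p3, p4, p5]"
      using assms(2-) irr by (auto dest: E_sym)
    show "set [p0, p1, p2, p3, p4, p5] \<subseteq> V"
      using assms(2-7) graph_edge_in_V[OF G] by auto
    fix i j assume "i < length [p0, p1, p2, p3, p4, p5]" "j < length [p0, p1, p2, p3, p4, p5]"
    then have "i < 6" "j < 6" by simp_all
    then show "E ([p0, p1, p2, p3, p4, p5] ! i) ([p0, p1, p2, p3, p4, p5] ! j) \<longleftrightarrow> cycle_adj 6 i j"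
      using assms(2-) assms(2-7)[THEN E_sym] assms(8-)[THEN nE_sym] irr
      unfolding less_6_cases by (elim disjE) (simp_all add: cycle_adj_def)
  qed
  then show ?thesis by (simp add: eval_nat_numeral)
qed

lemma induced_C7I:
  assumes G: "graph V E"
    and "E p0 p1" "E p1 p2" "E p2 p3" "E p3 p4" "E p4 p5" "E p5 p6" "E p6 p0"
    and "\<not> E p0 p2" "\<not> E p0 p3" "\<not> E p0 p4" "\<not> E p0 p5" "\<not> E p1 p3" "\<not> E p1 p4"
      "\<not> E p1 p5" "\<not> E p1 p6" "\<not> E p2 p4" "\<not> E p2 p5" "\<not> E p2 p6" "\<not> E p3 p5"
      "\<not> E p3 p6" "\<not> E p4 p6"
  shows "has_induced V E 7 (cycle_adj 7)"
proof -
  note E_sym = graph_sym[OF G] and irr = graph_irrefl[OF G]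
  have nE_sym: "\<not> E a b \<Longrightarrow> \<not> E b a" for a b using E_sym by blast
  have "has_induced V E (length [p0, p1, p2, p3, p4, p5, p6]) (cycle_adj 7)"
  proof (rule has_induced_of_list)
    show "distinct [p0, p1, p2, p3, p4, p5, p6]"
      using assms(2-) irr by (auto dest: E_sym)
    show "set [p0, p1, p2, p3, p4, p5, p6] \<subseteq> V"
      using assms(2-8) graph_edge_in_V[OF G] by auto
    fix i j
    assume "i < length [p0, p1, p2, p3, p4, p5, p6]" "j < length [p0, p1, p2, p3, p4, p5, p6]"
    then have "i < 7" "j < 7" by simp_all
    then show "E ([p0, p1, p2, p3, p4, p5, p6] ! i) ([p0, p1, p2, p3, p4, p5, p6] ! j)
        \<longleftrightarrow> cycle_adj 7 i j"
      using assms(2-) assms(2-8)[THEN E_sym] assms(9-)[THEN nE_sym] irr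
      unfolding less_7_cases by (elim disjE) (simp_all add: cycle_adj_def)
  qed
  then show ?thesis by (simp add: eval_nat_numeral)
qed

lemma induced_P7I:
  assumes G: "graph V E"
    and "E p0 p1" "E p1 p2" "E p2 p3" "E p3 p4" "E p4 p5" "E p5 p6"
    and "\<not> E p0 p2" "\<not> E p0 p3" "\<not> E p0 p4" "\<not> E p0 p5" "\<not> E p0 p6" "\<not> E p1 p3"
      "\<not> E p1 p4" "\<not> E p1 p5" "\<not> E p1 p6" "\<not> E p2 p4" "\<not> E p2 p5" "\<not> E p2 p6"
      "\<not> E p3 p5" "\<not> E p3 p6" "\<not> E p4 p6"
  shows "has_induced V E 7 path_adj"
proof -
  note E_sym = graph_sym[OF G] and irr = graph_irrefl[OF G]
  have nE_sym: "\<not> E a b \<Longrightarrow> \<not> E b a" for a b using E_sym by blast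
  have "has_induced V E (length [p0, p1, p2, p3, p4, p5, p6]) path_adj"
  proof (rule has_induced_of_list)
    show "distinct [p0, p1, p2, p3, p4, p5, p6]"
      using assms(2-) irr by (auto dest: E_sym)
    show "set [p0, p1, p2, p3, p4, p5, p6] \<subseteq> V"
      using assms(2-7) graph_edge_in_V[OF G] by (auto dest: E_sym)
    fix i j
    assume "i < length [p0, p1, p2, p3, p4, p5, p6]" "j < length [p0, p1, p2, p3, p4, p5, p6]"
    then have "i < 7" "j < 7" by simp_all
    then show "E ([p0, p1, p2, p3, p4, p5, p6] ! i) ([p0, p1, p2, p3, p4, p5, p6] ! j)
        \<longleftrightarrow> path_adj i j"
      using assms(2-) assms(2-7)[THEN E_sym] assms(8-)[THEN nE_sym] irr
      unfolding less_7_cases by (elim disjE) (simp_all add: path_adj_def)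
  qed
  then show ?thesis by (simp add: eval_nat_numeral)
qed

lemma induces_P4I:
  assumes G: "graph V E" and "distinct [a, b, c, d]"
    and "E a b" "E b c" "E c d" "\<not> E a c" "\<not> E b d" "\<not> E a d"
  shows "induces_P4 E {a, b, c, d}"
  unfolding induces_P4_def
proof (intro exI[of _ "nth [a, b, c, d]"] conjI)
  show "bij_betw (nth [a, b, c, d]) {0..<4} {a, b, c, d}"
    by (rule bij_betw_nth[OF assms(2)]) auto
  have "E b a" "E c b" "E d c" "\<not> E c a" "\<not> E d b" "\<not> E d a"
    using assms(3-) graph_sym[OF G] by blast+
  then show "\<forall>i<4. \<forall>j<4. E ([a, b, c, d] ! i) ([a, b, c, d] ! j) \<longleftrightarrow> path_adj i j"
    using assms(3-) graph_irrefl[OF G] unfolding less_4_cases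
    by (simp add: path_adj_def)
qed

lemma induces_P4_cases:
  assumes "distinct [a, b, c, d]" "induces_P4 E {a, b, c, d}" "E b c" "\<not> E a d"
  shows "(E a b \<and> E c d \<and> \<not> E a c \<and> \<not> E b d) \<or> (E a c \<and> E b d \<and> \<not> E a b \<and> \<not> E c d)"
proof -
  obtain f where bij: "bij_betw f {0..<4::nat} {a, b, c, d}"
    and f: "\<And>i j. i < 4 \<Longrightarrow> j < 4 \<Longrightarrow> E (f i) (f j) \<longleftrightarrow> path_adj i j"
    using assms(2) unfolding induces_P4_def by blast
  have "{a, b, c, d} \<subseteq> f ` {0..<4}"
    using bij by (simp add: bij_betw_def)
  then obtain i0 i1 i2 i3 where idx: "i0 < 4" "i1 < 4" "i2 < 4" "i3 < 4"
    and vs: "a = f i0" "b = f i1" "c = f i2" "d = f i3"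
    by auto
  have "distinct [i0, i1, i2, i3]"
    using assms(1) vs by auto
  moreover have "path_adj i1 i2" "\<not> path_adj i0 i3"
    using assms(3,4) f idx vs by auto
  ultimately have "(path_adj i0 i1 \<and> path_adj i2 i3 \<and> \<not> path_adj i0 i2 \<and> \<not> path_adj i1 i3) \<or>
      (path_adj i0 i2 \<and> path_adj i1 i3 \<and> \<not> path_adj i0 i1 \<and> \<not> path_adj i2 i3)"
    using idx unfolding less_4_cases path_adj_def by (elim disjE) simp_all
  then show ?thesis
    using f idx vs by auto
qed

section \<open>Graphs without induced \<open>P7\<close>, \<open>C4\<close>, \<open>C6\<close> and \<open>C7\<close>\<close>

locale P7_C4_C6_C7_free =
  fixes V :: "'a set" and E :: "'a \<Rightarrow> 'a \<Rightarrow> bool"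
  assumes graph: "graph V E"
    and P7_free: "\<not> has_induced V E 7 path_adj"
    and C4_free: "\<not> has_induced V E 4 (cycle_adj 4)"
    and C6_free: "\<not> has_induced V E 6 (cycle_adj 6)"
    and C7_free: "\<not> has_induced V E 7 (cycle_adj 7)"
begin

lemma E_sym: "E a b \<Longrightarrow> E b a"
  using graph by (rule graph_sym)

lemma E_commute: "E a b \<longleftrightarrow> E b a"
  using E_sym by blast

lemma no_C4:
  "E p0 p1 \<Longrightarrow> E p1 p2 \<Longrightarrow> E p2 p3 \<Longrightarrow> E p3 p0 \<Longrightarrow> \<not> E p0 p2 \<Longrightarrow> \<not> E p1 p3 \<Longrightarrow>
    p0 \<noteq> p2 \<Longrightarrow> p1 \<noteq> p3 \<Longrightarrow> False"
  using C4_free induced_C4I[OF graph] by blast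

lemma no_C6:
  "E p0 p1 \<Longrightarrow> E p1 p2 \<Longrightarrow> E p2 p3 \<Longrightarrow> E p3 p4 \<Longrightarrow> E p4 p5 \<Longrightarrow> E p5 p0 \<Longrightarrow>
    \<not> E p0 p2 \<Longrightarrow> \<not> E p0 p3 \<Longrightarrow> \<not> E p0 p4 \<Longrightarrow> \<not> E p1 p3 \<Longrightarrow> \<not> E p1 p4 \<Longrightarrow> \<not> E p1 p5 \<Longrightarrow>
    \<not> E p2 p4 \<Longrightarrow> \<not> E p2 p5 \<Longrightarrow> \<not> E p3 p5 \<Longrightarrow> False"
  using C6_free induced_C6I[OF graph] by blast

lemma no_C7:
  "E p0 p1 \<Longrightarrow> E p1 p2 \<Longrightarrow> E p2 p3 \<Longrightarrow> E p3 p4 \<Longrightarrow> E p4 p5 \<Longrightarrow> E p5 p6 \<Longrightarrow> E p6 p0 \<Longrightarrow>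
    \<not> E p0 p2 \<Longrightarrow> \<not> E p0 p3 \<Longrightarrow> \<not> E p0 p4 \<Longrightarrow> \<not> E p0 p5 \<Longrightarrow> \<not> E p1 p3 \<Longrightarrow> \<not> E p1 p4 \<Longrightarrow>
    \<not> E p1 p5 \<Longrightarrow> \<not> E p1 p6 \<Longrightarrow> \<not> E p2 p4 \<Longrightarrow> \<not> E p2 p5 \<Longrightarrow> \<not> E p2 p6 \<Longrightarrow> \<not> E p3 p5 \<Longrightarrow>
    \<not> E p3 p6 \<Longrightarrow> \<not> E p4 p6 \<Longrightarrow> False"
  using C7_free induced_C7I[OF graph] by blast

lemma no_P7:
  "E p0 p1 \<Longrightarrow> E p1 p2 \<Longrightarrow> E p2 p3 \<Longrightarrow> E p3 p4 \<Longrightarrow> E p4 p5 \<Longrightarrow> E p5 p6 \<Longrightarrow>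
    \<not> E p0 p2 \<Longrightarrow> \<not> E p0 p3 \<Longrightarrow> \<not> E p0 p4 \<Longrightarrow> \<not> E p0 p5 \<Longrightarrow> \<not> E p0 p6 \<Longrightarrow> \<not> E p1 p3 \<Longrightarrow>
    \<not> E p1 p4 \<Longrightarrow> \<not> E p1 p5 \<Longrightarrow> \<not> E p1 p6 \<Longrightarrow> \<not> E p2 p4 \<Longrightarrow> \<not> E p2 p5 \<Longrightarrow> \<not> E p2 p6 \<Longrightarrow>
    \<not> E p3 p5 \<Longrightarrow> \<not> E p3 p6 \<Longrightarrow> \<not> E p4 p6 \<Longrightarrow> False"
  using P7_free induced_P7I[OF graph] by blast

lemma no_clique_closes_induced_P5:
  assumes path: "E p0 p1" "E p1 p2" "E p2 p3" "E p3 p4"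
    and induced: "\<not> E p0 p2" "\<not> E p0 p3" "\<not> E p0 p4" "\<not> E p1 p3" "\<not> E p1 p4" "\<not> E p2 p4"
    and clique: "\<And>s s'. s \<in> K \<Longrightarrow> s' \<in> K \<Longrightarrow> s \<noteq> s' \<Longrightarrow> E s s'"
    and inner: "\<And>s. s \<in> K \<Longrightarrow> \<not> E p1 s \<and> \<not> E p2 s \<and> \<not> E p3 s"
    and ends: "\<exists>s\<in>K. E p0 s" "\<exists>s\<in>K. E p4 s"
  shows False
proof -
  obtain s0 s4 where s0: "s0 \<in> K" "E p0 s0" and s4: "s4 \<in> K" "E p4 s4"
    using ends by blast
  note facts = path induced s0 s4 inner[OF s0(1)] inner[OF s4(1)]
  show False
  proof (cases "E p0 s4")
    case True
    show False
      by (rule no_C6[of p0 p1 p2 p3 p4 s4]) (use facts True in \<open>simp_all add: E_commute\<close>)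
  next
    case p0_s4: False
    show False
    proof (cases "E p4 s0")
      case True
      show False
        by (rule no_C6[of p0 p1 p2 p3 p4 s0]) (use facts True in \<open>simp_all add: E_commute\<close>)
    next
      case False
      have "E s4 s0"
        using clique s0 s4 p0_s4 by blast
      show False
        by (rule no_C7[of p0 p1 p2 p3 p4 s4 s0])
          (use facts p0_s4 False \<open>E s4 s0\<close> in \<open>simp_all add: E_commute\<close>)
    qed
  qed
qed

end

section \<open>Symmetries of the index cycle\<close>

lemma nxt_less [simp]: "nxt j < 5"
  and prv_less [simp]: "prv j < 5"
  by (simp_all add: nxt_def prv_def)

lemma prv_nxt [simp]: "j < 5 \<Longrightarrow> prv (nxt j) = j"
  and nxt_prv [simp]: "j < 5 \<Longrightarrow> nxt (prv j) = j"
  unfolding nxt_def prv_def by presburger+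

text \<open>The index \<open>1\<close> is written \<open>Suc 0\<close>, the simp normal form of \<open>1 :: nat\<close>.\<close>

lemma nxt_numeral [simp]: "nxt 0 = 1" "nxt (Suc 0) = 2" "nxt 2 = 3" "nxt 3 = 4" "nxt 4 = 0"
  and prv_numeral [simp]: "prv 0 = 4" "prv (Suc 0) = 0" "prv 2 = 1" "prv 3 = 2" "prv 4 = 3"
  by (simp_all add: nxt_def prv_def)

lemma nxt_nxt: "nxt (nxt j) = (j + 2) mod 5"
  by (simp add: nxt_def mod_Suc_eq)

lemma nxt_neq: "j < 5 \<Longrightarrow> nxt j \<noteq> j"
  and nxt_nxt_neq: "j < 5 \<Longrightarrow> nxt (nxt j) \<noteq> j"
  unfolding nxt_nxt unfolding nxt_def by presburger+

definition C5_symmetry :: "(nat \<Rightarrow> nat) \<Rightarrow> bool" where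
  "C5_symmetry \<sigma> \<longleftrightarrow> \<sigma> ` {..<5} \<subseteq> {..<5} \<and> inj_on \<sigma> {..<5} \<and>
     ((\<forall>j<5. \<sigma> (nxt j) = nxt (\<sigma> j)) \<or> (\<forall>j<5. \<sigma> (nxt j) = prv (\<sigma> j)))"

lemma C5_symmetry_rotate: "C5_symmetry (\<lambda>j. (j + i) mod 5)"
proof -
  have "inj_on (\<lambda>j. (j + i) mod 5) {..<5}"
  proof (rule inj_onI)
    fix j k :: nat assume "j \<in> {..<5}" "k \<in> {..<5}" "(j + i) mod 5 = (k + i) mod 5"
    then have "(j + i mod 5) mod 5 = (k + i mod 5) mod 5" "i mod 5 < 5"
      by (simp_all add: mod_simps)
    then show "j = k"
      using \<open>j \<in> {..<5}\<close> \<open>k \<in> {..<5}\<close> unfolding lessThan_iff less_5_cases by auto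
  qed
  moreover have "(nxt j + i) mod 5 = nxt ((j + i) mod 5)" for j
    by (simp add: nxt_def mod_simps add_ac)
  ultimately show ?thesis
    by (auto simp: C5_symmetry_def)
qed

lemma C5_symmetry_reflect: "C5_symmetry (\<lambda>j. (5 - j) mod 5)"
  unfolding C5_symmetry_def inj_on_def by (auto simp: nxt_def prv_def less_5_cases)

context
  fixes \<sigma> :: "nat \<Rightarrow> nat"
  assumes \<sigma>: "C5_symmetry \<sigma>"
begin

lemma C5_symmetry_less: "j < 5 \<Longrightarrow> \<sigma> j < 5"
  using \<sigma> by (auto simp: C5_symmetry_def)

lemma C5_symmetry_image: "\<sigma> ` {..<5} = {..<5}"
  using \<sigma> by (intro endo_inj_surj) (auto simp: C5_symmetry_def)

lemma C5_symmetry_cases: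
  obtains (rotation) "\<And>j. j < 5 \<Longrightarrow> \<sigma> (nxt j) = nxt (\<sigma> j) \<and> \<sigma> (prv j) = prv (\<sigma> j)"
    | (reflection) "\<And>j. j < 5 \<Longrightarrow> \<sigma> (nxt j) = prv (\<sigma> j) \<and> \<sigma> (prv j) = nxt (\<sigma> j)"
proof -
  have "\<sigma> (prv j) < 5" if "j < 5" for j
    by (simp add: C5_symmetry_less)
  then show ?thesis
    using \<sigma> that unfolding C5_symmetry_def by (metis nxt_prv prv_less prv_nxt)
qed

lemma C5_symmetry_nbrs: "j < 5 \<Longrightarrow> {\<sigma> (prv j), \<sigma> (nxt j)} = {prv (\<sigma> j), nxt (\<sigma> j)}"
  by (cases rule: C5_symmetry_cases) auto

lemma C5_symmetry_path:
  assumes "j < 5"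
  shows "(\<sigma> (nxt j) = nxt (\<sigma> j) \<and> \<sigma> (nxt (nxt j)) = nxt (nxt (\<sigma> j))) \<or>
    (\<sigma> (nxt j) = nxt (\<sigma> (nxt (nxt j))) \<and> \<sigma> j = nxt (nxt (\<sigma> (nxt (nxt j)))))"
proof (cases rule: C5_symmetry_cases)
  case rotation
  then show ?thesis
    using assms by simp
next
  case reflection
  then have "\<sigma> (nxt j) = prv (\<sigma> j)" "\<sigma> (nxt (nxt j)) = prv (\<sigma> (nxt j))"
    using assms by simp_all
  then show ?thesis
    using assms by (simp add: C5_symmetry_less)
qed

end

section \<open>Blowups of \<open>C5\<close>\<close>

definition C5_blowup :: "'a set \<Rightarrow> ('a \<Rightarrow> 'a \<Rightarrow> bool) \<Rightarrow> (nat \<Rightarrow> 'a set) \<Rightarrow> bool" where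
  "C5_blowup V E B \<longleftrightarrow>
     (\<forall>j<5. B j \<subseteq> V) \<and>
     (\<forall>j<5. \<forall>x\<in>B j. \<forall>y\<in>B j. x \<noteq> y \<longrightarrow> E x y) \<and>
     (\<forall>j<5. \<forall>k<5. j \<noteq> k \<longrightarrow> B j \<inter> B k = {}) \<and>
     (\<forall>j<5. \<forall>v\<in>B j. (\<exists>u\<in>B (prv j). E v u) \<and> (\<exists>u\<in>B (nxt j). E v u)) \<and>
     (\<forall>j<5. \<forall>x\<in>B j. \<forall>y\<in>B ((j + 2) mod 5). \<not> E x y)"

definition no_cross_P4 :: "('a \<Rightarrow> 'a \<Rightarrow> bool) \<Rightarrow> (nat \<Rightarrow> 'a set) \<Rightarrow> bool" where
  "no_cross_P4 E B \<longleftrightarrow> (\<forall>j<5. \<forall>a\<in>B j. \<forall>b\<in>B (nxt j). \<forall>c\<in>B (nxt j). \<forall>d\<in>B (nxt (nxt j)).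
     E a b \<longrightarrow> E c d \<longrightarrow> E a c \<or> E b d)"

lemma C5_blowupD:
  assumes "C5_blowup V E B" "j < 5"
  shows "B j \<subseteq> V"
    and "x \<in> B j \<Longrightarrow> y \<in> B j \<Longrightarrow> x \<noteq> y \<Longrightarrow> E x y"
    and "k < 5 \<Longrightarrow> j \<noteq> k \<Longrightarrow> B j \<inter> B k = {}"
    and "v \<in> B j \<Longrightarrow> \<exists>u\<in>B (prv j). E v u"
    and "v \<in> B j \<Longrightarrow> \<exists>u\<in>B (nxt j). E v u"
    and "x \<in> B j \<Longrightarrow> y \<in> B (nxt (nxt j)) \<Longrightarrow> \<not> E x y"
  using assms unfolding C5_blowup_def nxt_nxt by blast+

lemma no_cross_P4D:
  assumes "no_cross_P4 E B" "j < 5"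
    and "a \<in> B j" "b \<in> B (nxt j)" "c \<in> B (nxt j)" "d \<in> B (nxt (nxt j))" "E a b" "E c d"
  shows "E a c \<or> E b d"
  using assms unfolding no_cross_P4_def by blast

lemma C5_blowup_cross_quadruple:
  assumes "C5_blowup V E B" "j < 5"
    and "a \<in> B j" "b \<in> B (nxt j)" "c \<in> B (nxt j)" "d \<in> B (nxt (nxt j))" "b \<noteq> c"
  shows "distinct [a, b, c, d]" "E b c" "\<not> E a d"
proof -
  have "B j \<inter> B (nxt j) = {}" "B j \<inter> B (nxt (nxt j)) = {}" "B (nxt j) \<inter> B (nxt (nxt j)) = {}"
    using C5_blowupD(3)[OF assms(1)] assms(2) nxt_neq[of j] nxt_nxt_neq[of j] nxt_neq[of "nxt j"]
    by (metis nxt_less)+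
  then show "distinct [a, b, c, d]"
    using assms(3-) by auto
  show "E b c" "\<not> E a d"
    using C5_blowupD(2,6)[OF assms(1)] assms(2-) by (metis nxt_less)+
qed

lemma C5_blowup_cross_P4_iff:
  assumes G: "graph V E" and blowup: "C5_blowup V E B" and j: "j < 5"
    and abcd: "a \<in> B j" "b \<in> B (nxt j)" "c \<in> B (nxt j)" "d \<in> B (nxt (nxt j))"
  shows "b \<noteq> c \<and> induces_P4 E {a, b, c, d} \<longleftrightarrow>
    (E a b \<and> E c d \<and> \<not> E a c \<and> \<not> E b d) \<or> (E a c \<and> E b d \<and> \<not> E a b \<and> \<not> E c d)"
    (is "_ \<longleftrightarrow> ?path_abcd \<or> ?path_acbd")
proof (cases "b = c")
  case False
  note quad = C5_blowup_cross_quadruple[OF blowup j abcd False]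
  have "induces_P4 E {a, b, c, d} \<longleftrightarrow> ?path_abcd \<or> ?path_acbd"
  proof
    assume "induces_P4 E {a, b, c, d}"
    then show "?path_abcd \<or> ?path_acbd"
      by (rule induces_P4_cases[OF quad(1) _ quad(2,3)])
  next
    assume "?path_abcd \<or> ?path_acbd"
    then show "induces_P4 E {a, b, c, d}"
    proof
      assume ?path_abcd
      then show ?thesis
        using induces_P4I[OF G quad(1)] quad(2,3) by blast
    next
      assume ?path_acbd
      moreover have "distinct [a, c, b, d]" "E c b"
        using quad graph_sym[OF G] by auto
      ultimately have "induces_P4 E {a, c, b, d}"
        using induces_P4I[OF G] quad(3) by blast
      then show ?thesis
        by (simp add: insert_commute)
    qed
  qed
  then show ?thesis
    using False by blast
qed auto

lemma nice_blowup_iff: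
  assumes G: "graph V E"
  shows "nice_blowup V E B \<longleftrightarrow> C5_blowup V E B \<and> no_cross_P4 E B"
proof -
  have "nice_blowup V E B \<longleftrightarrow> C5_blowup V E B \<and> (\<forall>j<5. \<not> (\<exists>a\<in>B j. \<exists>b\<in>B (nxt j).
      \<exists>c\<in>B (nxt j). \<exists>d\<in>B (nxt (nxt j)). b \<noteq> c \<and> induces_P4 E {a, b, c, d}))"
    unfolding nice_blowup_def C5_blowup_def by (simp only: conj_assoc)
  also have "\<dots> \<longleftrightarrow> C5_blowup V E B \<and> no_cross_P4 E B"
  proof (cases "C5_blowup V E B")
    case True
    have "(\<forall>j<5. \<not> (\<exists>a\<in>B j. \<exists>b\<in>B (nxt j). \<exists>c\<in>B (nxt j). \<exists>d\<in>B (nxt (nxt j)).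
        b \<noteq> c \<and> induces_P4 E {a, b, c, d})) \<longleftrightarrow>
      (\<forall>j<5. \<forall>a\<in>B j. \<forall>b\<in>B (nxt j). \<forall>c\<in>B (nxt j). \<forall>d\<in>B (nxt (nxt j)).
        \<not> (E a b \<and> E c d \<and> \<not> E a c \<and> \<not> E b d) \<and> \<not> (E a c \<and> E b d \<and> \<not> E a b \<and> \<not> E c d))"
      by (simp add: C5_blowup_cross_P4_iff[OF G True] del: de_Morgan_conj)
    also have "\<dots> \<longleftrightarrow> no_cross_P4 E B"
      unfolding no_cross_P4_def by blast
    finally show ?thesis
      using True by blast
  qed simp
  finally show ?thesis .
qed

context
  fixes \<sigma> :: "nat \<Rightarrow> nat"
  assumes \<sigma>: "C5_symmetry \<sigma>"
begin

lemma C5_blowup_comp: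
  assumes G: "graph V E" and blowup: "C5_blowup V E B"
  shows "C5_blowup V E (B \<circ> \<sigma>)"
  unfolding C5_blowup_def comp_apply
proof (intro conjI allI impI ballI)
  fix j :: nat assume j: "j < 5"
  note less = C5_symmetry_less[OF \<sigma>] and bag = C5_blowupD[OF blowup less[OF j]]
  show "B (\<sigma> j) \<subseteq> V"
    by (rule bag(1))
  show "E x y" if "x \<in> B (\<sigma> j)" "y \<in> B (\<sigma> j)" "x \<noteq> y" for x y
    using bag(2) that .
  show "B (\<sigma> j) \<inter> B (\<sigma> k) = {}" if "k < 5" "j \<noteq> k" for k
    using \<sigma> bag(3) that j less unfolding C5_symmetry_def inj_on_def by blast
  fix v assume v: "v \<in> B (\<sigma> j)"
  have "{\<sigma> (prv j), \<sigma> (nxt j)} = {prv (\<sigma> j), nxt (\<sigma> j)}"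
    using C5_symmetry_nbrs[OF \<sigma> j] .
  then show "\<exists>u\<in>B (\<sigma> (prv j)). E v u" "\<exists>u\<in>B (\<sigma> (nxt j)). E v u"
    using bag(4,5)[OF v] by (auto simp: doubleton_eq_iff)
next
  fix j :: nat and a b assume j: "j < 5" and a: "a \<in> B (\<sigma> j)" and b: "b \<in> B (\<sigma> ((j + 2) mod 5))"
  note less = C5_symmetry_less[OF \<sigma>]
  from C5_symmetry_path[OF \<sigma> j] show "\<not> E a b"
  proof
    assume "\<sigma> (nxt j) = nxt (\<sigma> j) \<and> \<sigma> (nxt (nxt j)) = nxt (nxt (\<sigma> j))"
    then show ?thesis
      using C5_blowupD(6)[OF blowup less[OF j] a] b by (simp add: nxt_nxt)
  next
    assume "\<sigma> (nxt j) = nxt (\<sigma> (nxt (nxt j))) \<and> \<sigma> j = nxt (nxt (\<sigma> (nxt (nxt j))))"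
    then have "b \<in> B (\<sigma> (nxt (nxt j)))" "a \<in> B (nxt (nxt (\<sigma> (nxt (nxt j)))))"
      using a b by (simp_all add: nxt_nxt)
    then have "\<not> E b a"
      by (rule C5_blowupD(6)[OF blowup less[OF nxt_less]])
    then show ?thesis
      using graph_sym[OF G] by blast
  qed
qed

lemma no_cross_P4_comp:
  assumes G: "graph V E" and no_cross: "no_cross_P4 E B"
  shows "no_cross_P4 E (B \<circ> \<sigma>)"
  unfolding no_cross_P4_def comp_apply
proof (intro allI impI ballI)
  fix j :: nat and a b c d
  assume j: "j < 5" and abcd: "a \<in> B (\<sigma> j)" "b \<in> B (\<sigma> (nxt j))" "c \<in> B (\<sigma> (nxt j))"
      "d \<in> B (\<sigma> (nxt (nxt j)))" and "E a b" "E c d"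
  note less = C5_symmetry_less[OF \<sigma>]
  from C5_symmetry_path[OF \<sigma> j] show "E a c \<or> E b d"
  proof
    assume "\<sigma> (nxt j) = nxt (\<sigma> j) \<and> \<sigma> (nxt (nxt j)) = nxt (nxt (\<sigma> j))"
    then have "b \<in> B (nxt (\<sigma> j))" "c \<in> B (nxt (\<sigma> j))" "d \<in> B (nxt (nxt (\<sigma> j)))"
      using abcd by simp_all
    then show ?thesis
      using no_cross_P4D[OF no_cross less[OF j] abcd(1)] \<open>E a b\<close> \<open>E c d\<close> by blast
  next
    assume "\<sigma> (nxt j) = nxt (\<sigma> (nxt (nxt j))) \<and> \<sigma> j = nxt (nxt (\<sigma> (nxt (nxt j))))"
    then have "c \<in> B (nxt (\<sigma> (nxt (nxt j))))" "b \<in> B (nxt (\<sigma> (nxt (nxt j))))"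
        "a \<in> B (nxt (nxt (\<sigma> (nxt (nxt j)))))"
      using abcd by simp_all
    then have "E d b \<or> E c a"
      using no_cross_P4D[OF no_cross less[OF nxt_less] abcd(4)] graph_sym[OF G] \<open>E a b\<close> \<open>E c d\<close>
      by blast
    then show ?thesis
      using graph_sym[OF G] by blast
  qed
qed

lemma nice_blowup_comp:
  "graph V E \<Longrightarrow> nice_blowup V E B \<Longrightarrow> nice_blowup V E (B \<circ> \<sigma>)"
  by (simp add: nice_blowup_iff C5_blowup_comp no_cross_P4_comp)

lemma blowup_verts_comp: "blowup_verts (B \<circ> \<sigma>) = blowup_verts B"
proof -
  have "(\<Union>j<5. B (\<sigma> j)) = (\<Union>k\<in>\<sigma> ` {..<5}. B k)"
    by auto
  then show ?thesis
    unfolding blowup_verts_def C5_symmetry_image[OF \<sigma>] by simp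
qed

lemma supp_comp: "supp E B v = \<sigma> ` supp E (B \<circ> \<sigma>) v"
proof
  show "\<sigma> ` supp E (B \<circ> \<sigma>) v \<subseteq> supp E B v"
    using C5_symmetry_less[OF \<sigma>] by (auto simp: supp_def)
  show "supp E B v \<subseteq> \<sigma> ` supp E (B \<circ> \<sigma>) v"
  proof
    fix k assume k: "k \<in> supp E B v"
    then have "k \<in> \<sigma> ` {..<5}"
      by (simp add: supp_def C5_symmetry_image[OF \<sigma>])
    then obtain j where "j < 5" "k = \<sigma> j"
      by auto
    then show "k \<in> \<sigma> ` supp E (B \<circ> \<sigma>) v"
      using k by (auto simp: supp_def)
  qed
qed

lemma A3_comp:
  assumes k: "k < 5"
  shows "A3 V E (B \<circ> \<sigma>) k = A3 V E B (\<sigma> k)"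
proof -
  have inj: "inj_on \<sigma> {..<5}"
    using \<sigma> by (simp add: C5_symmetry_def)
  have "\<sigma> ` {prv k, k, nxt k} = insert (\<sigma> k) {\<sigma> (prv k), \<sigma> (nxt k)}"
    by auto
  also have "\<dots> = {prv (\<sigma> k), \<sigma> k, nxt (\<sigma> k)}"
    unfolding C5_symmetry_nbrs[OF \<sigma> k] by auto
  finally have image: "\<sigma> ` {prv k, k, nxt k} = {prv (\<sigma> k), \<sigma> k, nxt (\<sigma> k)}" .
  have "supp E (B \<circ> \<sigma>) v = {prv k, k, nxt k} \<longleftrightarrow> supp E B v = {prv (\<sigma> k), \<sigma> k, nxt (\<sigma> k)}" for v
  proof -
    have "supp E (B \<circ> \<sigma>) v \<subseteq> {..<5}" "{prv k, k, nxt k} \<subseteq> {..<5}"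
      using k by (auto simp: supp_def)
    then show ?thesis
      unfolding supp_comp[of E B v] image[symmetric] by (rule inj_on_image_eq_iff[OF inj, symmetric])
  qed
  then show ?thesis
    unfolding A3_def blowup_verts_comp by blast
qed

lemma maximal_nice_blowup_comp:
  "graph V E \<Longrightarrow> maximal_nice_blowup V E B \<Longrightarrow> maximal_nice_blowup V E (B \<circ> \<sigma>)"
  by (simp add: maximal_nice_blowup_def nice_blowup_comp blowup_verts_comp)

end

lemma blowup_verts_insert:
  assumes "j < 5"
  shows "blowup_verts (B(j := insert v (B j))) = insert v (blowup_verts B)"
  unfolding blowup_verts_def
proof (intro equalityI subsetI)
  fix w assume "w \<in> (\<Union>k<5. (B(j := insert v (B j))) k)"
  then show "w \<in> insert v (\<Union>k<5. B k)"
    by (auto split: if_splits)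
next
  fix w assume "w \<in> insert v (\<Union>k<5. B k)"
  then show "w \<in> (\<Union>k<5. (B(j := insert v (B j))) k)"
    using assms by (metis UN_iff fun_upd_apply insertCI insertE lessThan_iff)
qed

section \<open>Vertices of \<open>A3\<close> and a maximal nice blowup\<close>

locale nice_C5_blowup = P7_C4_C6_C7_free V E for V :: "'a set" and E +
  fixes B :: "nat \<Rightarrow> 'a set"
  assumes nice: "nice_blowup V E B"
begin

lemma blowup: "C5_blowup V E B" and no_cross: "no_cross_P4 E B"
  using nice nice_blowup_iff[OF graph] by blast+

lemma bag_clique: "j < 5 \<Longrightarrow> a \<in> B j \<Longrightarrow> b \<in> B j \<Longrightarrow> a \<noteq> b \<Longrightarrow> E a b"
  using C5_blowupD(2)[OF blowup] by blast

lemma bag_nbr_prv: "j < 5 \<Longrightarrow> a \<in> B j \<Longrightarrow> \<exists>t\<in>B (prv j). E a t"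
  and bag_nbr_nxt: "j < 5 \<Longrightarrow> a \<in> B j \<Longrightarrow> \<exists>t\<in>B (nxt j). E a t"
  using C5_blowupD(4,5)[OF blowup] by blast+

lemma far_bags_nonadj:
  "a \<in> B j \<Longrightarrow> b \<in> B k \<Longrightarrow> j < 5 \<Longrightarrow> k < 5 \<Longrightarrow> k = (j + 2) mod 5 \<or> j = (k + 2) mod 5 \<Longrightarrow> \<not> E a b"
  using C5_blowupD(6)[OF blowup] E_sym unfolding nxt_nxt by blast

lemma bags_distinct: "a \<in> B j \<Longrightarrow> b \<in> B k \<Longrightarrow> j < 5 \<Longrightarrow> k < 5 \<Longrightarrow> j \<noteq> k \<Longrightarrow> a \<noteq> b"
  using C5_blowupD(3)[OF blowup] by blast

lemma A3_nbr: "x \<in> A3 V E B i \<Longrightarrow> j \<in> {prv i, i, nxt i} \<Longrightarrow> \<exists>t\<in>B j. E x t"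
  unfolding A3_def supp_def by blast

lemma A3_nonadj:
  "x \<in> A3 V E B i \<Longrightarrow> t \<in> B j \<Longrightarrow> j < 5 \<Longrightarrow> j \<notin> {prv i, i, nxt i} \<Longrightarrow> \<not> E x t \<and> \<not> E t x"
  unfolding A3_def supp_def using E_sym by blast

lemma A3_not_in_bag: "x \<in> A3 V E B i \<Longrightarrow> t \<in> B j \<Longrightarrow> j < 5 \<Longrightarrow> x \<noteq> t \<and> t \<noteq> x"
  unfolding A3_def blowup_verts_def by blast

text \<open>Used as conditional rewrite rules: given the bag memberships of the vertices involved, the
  simplifier decides non-adjacency and distinctness, finding the bag indices by matching.\<close>

lemmas bag_simps = far_bags_nonadj A3_nonadj bags_distinct A3_not_in_bag

context
  fixes x y u z :: 'a
  assumes x: "x \<in> A3 V E B 0" and y: "y \<in> A3 V E B 0" and xy: "E x y"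
    and u: "u \<in> B 0" "E x u" "\<not> E y u"
    and z: "z \<in> B 0" "\<not> E x z"
    and no_common_B1: "\<And>c. c \<in> B 1 \<Longrightarrow> E x c \<Longrightarrow> \<not> E z c"
begin

lemmas config = x y xy u z

lemma u_adj_z: "E u z"
  using bag_clique[OF _ u(1) z(1)] u(2) z(2) by auto

lemma B1_nbrs_of_x_and_z:
  assumes "b \<in> B 1" "E x b" "q \<in> B 1" "E z q"
  shows "\<not> E z b" "\<not> E x q" "E b q"
proof -
  show "\<not> E z b" "\<not> E x q"
    using no_common_B1 assms by blast+
  then show "E b q"
    using bag_clique[OF _ assms(1,3)] assms(2) by auto
qed

lemma u_adj_B1_nbr_of_z:
  assumes q: "q \<in> B 1" "E z q"
  shows "E u q"
proof (rule ccontr)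
  assume "\<not> E u q"
  obtain b where b: "b \<in> B 1" "E x b"
    using A3_nbr[OF x, of 1] by auto
  obtain c where c: "c \<in> B 1" "E u c"
    using bag_nbr_nxt[OF _ u(1)] by auto
  note bq = B1_nbrs_of_x_and_z[OF b q]
  have "E c q"
    using bag_clique[OF _ c(1) q(1)] c(2) \<open>\<not> E u q\<close> by auto
  have "E z c"
  proof (rule ccontr)
    assume "\<not> E z c"
    show False
      by (rule no_C4[of u c q z])
        (use config u_adj_z q c \<open>E c q\<close> \<open>\<not> E u q\<close> \<open>\<not> E z c\<close> in \<open>simp_all add: bag_simps E_commute\<close>)
  qed
  note bc = B1_nbrs_of_x_and_z[OF b c(1) this]
  have "E u b"
  proof (rule ccontr)
    assume "\<not> E u b"
    show False
      by (rule no_C4[of x b c u]) (use config b c bc \<open>\<not> E u b\<close> in \<open>simp_all add: bag_simps E_commute\<close>)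
  qed
  show False
    by (rule no_C4[of u b q z])
      (use config u_adj_z b q bq \<open>E u b\<close> \<open>\<not> E u q\<close> in \<open>simp_all add: bag_simps E_commute\<close>)
qed

lemma u_adj_B1_nbr_of_x:
  assumes p: "p \<in> B 1" "E x p"
  shows "E u p"
proof (rule ccontr)
  assume "\<not> E u p"
  obtain q where q: "q \<in> B 1" "E z q"
    using bag_nbr_nxt[OF _ z(1)] by auto
  show False
    by (rule no_C4[of x p q u])
      (use config p q B1_nbrs_of_x_and_z[OF p q] u_adj_B1_nbr_of_z[OF q] \<open>\<not> E u p\<close>
        in \<open>simp_all add: bag_simps E_commute\<close>)
qed

lemma u_adj_B4_nbr_of_z:
  assumes t: "t \<in> B 4" "E z t"
  shows "E u t"
proof -
  obtain b where b: "b \<in> B 1" "E x b"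
    using A3_nbr[OF x, of 1] by auto
  have "E t u \<or> E z b"
    by (rule no_cross_P4D[OF no_cross, where j = 4])
      (use t u z b u_adj_B1_nbr_of_x[OF b] in \<open>simp_all add: E_commute\<close>)
  then show ?thesis
    using no_common_B1[OF b] E_sym by blast
qed

lemma y_u_common_B1_nbr: "\<exists>p\<in>B 1. E y p \<and> E u p"
proof -
  obtain c where c: "c \<in> B 1" "E y c"
    using A3_nbr[OF y, of 1] by auto
  show ?thesis
  proof (cases "E x c")
    case True
    then show ?thesis
      using c u_adj_B1_nbr_of_x by blast
  next
    case False
    obtain b where b: "b \<in> B 1" "E x b"
      using A3_nbr[OF x, of 1] by auto
    have "E b c"
      using bag_clique[OF _ b(1) c(1)] b(2) False by auto
    have "E y b"
    proof (rule ccontr)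
      assume "\<not> E y b"
      show False
        by (rule no_C4[of x b c y]) (use config b c False \<open>E b c\<close> \<open>\<not> E y b\<close> in \<open>simp_all add: bag_simps E_commute\<close>)
    qed
    then show ?thesis
      using b u_adj_B1_nbr_of_x by blast
  qed
qed

lemma y_u_no_common_B4_nbr:
  assumes t: "t \<in> B 4" "E y t"
  shows "\<not> E u t" "\<not> E z t"
proof -
  obtain p where p: "p \<in> B 1" "E y p" "E u p"
    using y_u_common_B1_nbr by blast
  show "\<not> E u t"
  proof
    assume "E u t"
    show False
      by (rule no_C4[of y p u t]) (use config p t \<open>E u t\<close> in \<open>simp_all add: bag_simps E_commute\<close>)
  qed
  then show "\<not> E z t"
    using u_adj_B4_nbr_of_z t(1) by blast
qed

lemma x_adj_B4_nbr_of_y: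
  assumes a: "a \<in> B 4" "E y a"
  shows "E x a"
proof (rule ccontr)
  assume "\<not> E x a"
  obtain t where t: "t \<in> B 4" "E z t"
    using bag_nbr_prv[OF _ z(1)] by auto
  obtain b q where b: "b \<in> B 1" "E x b" and q: "q \<in> B 1" "E z q"
    using A3_nbr[OF x, of 1] bag_nbr_nxt[OF _ z(1)] by auto
  have "\<not> E y t"
    using t y_u_no_common_B4_nbr(2) by blast
  have "E t a"
    using bag_clique[OF _ t(1) a(1)] t(2) y_u_no_common_B4_nbr(2)[OF a] by auto
  obtain a' where a': "a' \<in> B 4" "E x a'"
    using A3_nbr[OF x, of 4] by auto
  note facts = config a t a' \<open>\<not> E x a\<close> \<open>\<not> E y t\<close> \<open>E t a\<close>
  show False
  proof (cases "E x t")
    case True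
    show False
      by (rule no_C4[of x t a y]) (use facts True in \<open>simp_all add: bag_simps E_commute\<close>)
  next
    case False
    have "E a' a"
      using bag_clique[OF _ a'(1) a(1)] a'(2) \<open>\<not> E x a\<close> by auto
    have "E y a'"
    proof (rule ccontr)
      assume "\<not> E y a'"
      show False
        by (rule no_C4[of x a' a y]) (use facts \<open>E a' a\<close> \<open>\<not> E y a'\<close> in \<open>simp_all add: bag_simps E_commute\<close>)
    qed
    then have "\<not> E z a'"
      using a'(1) y_u_no_common_B4_nbr(2) by blast
    have "E a' t"
      using bag_clique[OF _ a'(1) t(1)] t(2) \<open>\<not> E z a'\<close> by auto
    show False
      by (rule no_C6[of x a' t z q b])
        (use facts b q B1_nbrs_of_x_and_z[OF b q] False \<open>\<not> E z a'\<close> \<open>E a' t\<close>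
          in \<open>simp_all add: bag_simps E_commute\<close>)
  qed
qed

text \<open>The neighbour \<open>a\<close> of \<open>y\<close> in \<open>B 4\<close> sees \<open>x\<close> but neither \<open>u\<close> nor \<open>z\<close>; a path
  \<open>a - s - r\<close> into \<open>B 3\<close> and \<open>B 2\<close> then closes an induced \<open>C6\<close>, a forbidden \<open>P4\<close> or an
  induced \<open>P7\<close>.\<close>

lemma no_common_B1_nbr_absurd: False
proof -
  obtain a where a: "a \<in> B 4" "E y a"
    using A3_nbr[OF y, of 4] by auto
  obtain s where s: "s \<in> B 3" "E a s"
    using bag_nbr_prv[OF _ a(1)] by auto
  obtain r where r: "r \<in> B 2" "E s r"
    using bag_nbr_prv[OF _ s(1)] by auto
  obtain b q where b: "b \<in> B 1" "E x b" and q: "q \<in> B 1" "E z q"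
    using A3_nbr[OF x, of 1] bag_nbr_nxt[OF _ z(1)] by auto
  note facts = config a s r b q B1_nbrs_of_x_and_z[OF b q] x_adj_B4_nbr_of_y[OF a]
    y_u_no_common_B4_nbr[OF a] u_adj_B1_nbr_of_z[OF q]
  show False
  proof (cases "E r q")
    case True
    show False
      by (rule no_C6[of a s r q u x]) (use facts True in \<open>simp_all add: bag_simps E_commute\<close>)
  next
    case False
    show False
    proof (cases "E b r")
      case True
      have "E z b \<or> E q r"
        by (rule no_cross_P4D[OF no_cross, where j = 0]) (use z q b r True in simp_all)
      then show False
        using facts \<open>\<not> E r q\<close> E_sym by blast
    next
      case False
      show False
        by (rule no_P7[of r s a x b q z]) (use facts \<open>\<not> E r q\<close> False in \<open>simp_all add: bag_simps E_commute\<close>)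
    qed
  qed
qed

end

lemma A3_common_nbr_in_B1:
  assumes "x \<in> A3 V E B 0" "y \<in> A3 V E B 0" "E x y" "u \<in> B 0" "E x u" "\<not> E y u" "z \<in> B 0" "\<not> E x z"
  shows "\<exists>c\<in>B 1. E x c \<and> E z c"
  using no_common_B1_nbr_absurd[OF assms] by blast

lemma nice_C5_blowup_reflect: "nice_C5_blowup V E (B \<circ> (\<lambda>j. (5 - j) mod 5))"
  using nice_blowup_comp[OF C5_symmetry_reflect graph nice]
  by (intro nice_C5_blowup.intro P7_C4_C6_C7_free_axioms nice_C5_blowup_axioms.intro)

lemma A3_common_nbr_in_B4:
  assumes "x \<in> A3 V E B 0" "y \<in> A3 V E B 0" "E x y" "u \<in> B 0" "E x u" "\<not> E y u" "z \<in> B 0" "\<not> E x z"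
  shows "\<exists>c\<in>B 4. E x c \<and> E z c"
proof -
  interpret reflected: nice_C5_blowup V E "B \<circ> (\<lambda>j. (5 - j) mod 5)"
    by (rule nice_C5_blowup_reflect)
  have "\<exists>c\<in>(B \<circ> (\<lambda>j. (5 - j) mod 5)) 1. E x c \<and> E z c"
    by (rule reflected.A3_common_nbr_in_B1) (use assms in \<open>simp_all add: A3_comp[OF C5_symmetry_reflect]\<close>)
  then show ?thesis
    by simp
qed

lemma A3_complete_to_B0:
  assumes "x \<in> A3 V E B 0" "y \<in> A3 V E B 0" "E x y" "u \<in> B 0" "E x u" "\<not> E y u" "z \<in> B 0"
  shows "E x z"
proof (rule ccontr)
  assume "\<not> E x z"
  obtain c1 c4 where "c1 \<in> B 1" "E x c1" "E z c1" "c4 \<in> B 4" "E x c4" "E z c4"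
    using A3_common_nbr_in_B1[OF assms \<open>\<not> E x z\<close>] A3_common_nbr_in_B4[OF assms \<open>\<not> E x z\<close>] by blast
  then show False
    by (intro no_C4[of x c1 z c4]) (use assms \<open>\<not> E x z\<close> in \<open>simp_all add: bag_simps E_commute\<close>)
qed

lemma no_cross_P4_A3_first:
  assumes x: "x \<in> A3 V E B 0" and bcd: "b \<in> B 1" "c \<in> B 1" "d \<in> B 2" and "E x b" "E c d"
  shows "E x c \<or> E b d"
proof (rule ccontr)
  assume "\<not> (E x c \<or> E b d)"
  then have "\<not> E x c" "\<not> E b d" by simp_all
  obtain a where a: "a \<in> B 4" "E x a"
    using A3_nbr[OF x, of 4] by auto
  have "E c b"
    using bag_clique[OF _ bcd(2,1)] \<open>E x b\<close> \<open>\<not> E x c\<close> by auto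
  show False
  proof (rule no_clique_closes_induced_P5[of d c b x a "B 3"])
    show "\<exists>s\<in>B 3. E d s" "\<exists>s\<in>B 3. E a s"
      using bag_nbr_nxt[OF _ bcd(3)] bag_nbr_prv[OF _ a(1)] by auto
    show "\<And>s s'. s \<in> B 3 \<Longrightarrow> s' \<in> B 3 \<Longrightarrow> s \<noteq> s' \<Longrightarrow> E s s'"
      by (rule bag_clique[of 3]) simp_all
  qed (use assms a \<open>E c b\<close> \<open>\<not> E x c\<close> \<open>\<not> E b d\<close> in \<open>simp_all add: bag_simps E_commute\<close>)
qed

lemma no_cross_P4_A3_middle:
  assumes x: "x \<in> A3 V E B 0" and amd: "a \<in> B 4" "m \<in> B 0" "d \<in> B 1" and "E x m" "E a x" "E m d"
  shows "E a m \<or> E x d"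
proof (rule ccontr)
  assume "\<not> (E a m \<or> E x d)"
  then have "\<not> E a m" "\<not> E x d" by simp_all
  obtain r where r: "r \<in> B 2" "E d r"
    using bag_nbr_nxt[OF _ amd(3)] by auto
  show False
  proof (rule no_clique_closes_induced_P5[of r d m x a "B 3"])
    show "\<exists>s\<in>B 3. E r s" "\<exists>s\<in>B 3. E a s"
      using bag_nbr_nxt[OF _ r(1)] bag_nbr_prv[OF _ amd(1)] by auto
    show "\<And>s s'. s \<in> B 3 \<Longrightarrow> s' \<in> B 3 \<Longrightarrow> s \<noteq> s' \<Longrightarrow> E s s'"
      by (rule bag_clique[of 3]) simp_all
  qed (use assms r \<open>\<not> E a m\<close> \<open>\<not> E x d\<close> in \<open>simp_all add: bag_simps E_commute\<close>)
qed

lemma C5_blowup_insert_A3: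
  assumes x: "x \<in> A3 V E B 0" and complete: "\<forall>z\<in>B 0. E x z"
  shows "C5_blowup V E (B(0 := insert x (B 0)))"
  unfolding C5_blowup_def
proof (intro conjI allI impI ballI)
  have x_V: "x \<in> V" and x_new: "\<And>j. j < 5 \<Longrightarrow> x \<notin> B j"
    using x by (auto simp: A3_def blowup_verts_def)
  fix j :: nat assume j: "j < 5"
  show "(B(0 := insert x (B 0))) j \<subseteq> V"
    using C5_blowupD(1)[OF blowup j] x_V by auto
  show "E a b" if "a \<in> (B(0 := insert x (B 0))) j" "b \<in> (B(0 := insert x (B 0))) j" "a \<noteq> b" for a b
    using that bag_clique[OF j] complete E_sym by (auto split: if_splits)
  show "(B(0 := insert x (B 0))) j \<inter> (B(0 := insert x (B 0))) k = {}" if "k < 5" "j \<noteq> k" for k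
    using that C5_blowupD(3)[OF blowup j] x_new j by auto
  fix v assume v: "v \<in> (B(0 := insert x (B 0))) j"
  have "(\<exists>u\<in>B (prv j). E v u) \<and> (\<exists>u\<in>B (nxt j). E v u)"
    using v x_new[OF j] bag_nbr_prv[OF j] bag_nbr_nxt[OF j] A3_nbr[OF x, of 4] A3_nbr[OF x, of 1]
    by (auto split: if_splits)
  then show "\<exists>u\<in>(B(0 := insert x (B 0))) (prv j). E v u" "\<exists>u\<in>(B(0 := insert x (B 0))) (nxt j). E v u"
    by auto
next
  fix j :: nat and a b
  assume j: "j < 5" and a: "a \<in> (B(0 := insert x (B 0))) j" and b: "b \<in> (B(0 := insert x (B 0))) ((j + 2) mod 5)"
  have "(j + 2) mod 5 = 0 \<longleftrightarrow> j = 3"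
    using j by presburger
  then consider "a \<in> B j" "b \<in> B ((j + 2) mod 5)" | "a = x" "b \<in> B 2" | "b = x" "a \<in> B 3"
    using a b by (auto split: if_splits simp: numeral_2_eq_2)
  then show "\<not> E a b"
    by cases (use j far_bags_nonadj A3_nonadj[OF x] in auto)
qed

lemma no_cross_P4_insert_A3:
  assumes x: "x \<in> A3 V E B 0" and complete: "\<forall>z\<in>B 0. E x z"
  shows "no_cross_P4 E (B(0 := insert x (B 0)))"
  unfolding no_cross_P4_def
proof (intro allI impI ballI)
  interpret reflected: nice_C5_blowup V E "B \<circ> (\<lambda>j. (5 - j) mod 5)"
    by (rule nice_C5_blowup_reflect)
  have x': "x \<in> A3 V E (B \<circ> (\<lambda>j. (5 - j) mod 5)) 0"
    using x by (simp add: A3_comp[OF C5_symmetry_reflect])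
  note reflected_first = reflected.no_cross_P4_A3_first[OF x', simplified]
    and reflected_middle = reflected.no_cross_P4_A3_middle[OF x', simplified]
  fix j :: nat and a b c d
  assume j: "j < 5" and a: "a \<in> (B(0 := insert x (B 0))) j"
    and bc: "b \<in> (B(0 := insert x (B 0))) (nxt j)" "c \<in> (B(0 := insert x (B 0))) (nxt j)"
    and d: "d \<in> (B(0 := insert x (B 0))) (nxt (nxt j))" and "E a b" "E c d"
  note old = no_cross_P4D[OF no_cross j _ _ _ _ \<open>E a b\<close> \<open>E c d\<close>]
  from j show "E a c \<or> E b d"
    unfolding less_5_cases
  proof (elim disjE)
    assume "j = 0"
    then show ?thesis
      using old a bc d no_cross_P4_A3_first[OF x] \<open>E a b\<close> \<open>E c d\<close> by auto
  next
    assume "j = 3"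
    then show ?thesis
      using old a bc d reflected_first[of c b a] \<open>E a b\<close> \<open>E c d\<close> E_sym by auto
  next
    assume "j = 4"
    then show ?thesis
      using old a bc d no_cross_P4_A3_middle[OF x, of a c d] reflected_middle[of d b a] \<open>E a b\<close> \<open>E c d\<close> complete E_sym
      by auto
  qed (use old a bc d in auto)
qed

lemma nice_blowup_insert_A3:
  "x \<in> A3 V E B 0 \<Longrightarrow> \<forall>z\<in>B 0. E x z \<Longrightarrow> nice_blowup V E (B(0 := insert x (B 0)))"
  by (simp add: nice_blowup_iff[OF graph] C5_blowup_insert_A3 no_cross_P4_insert_A3)

lemma A3_nbhd_in_B0_eq:
  assumes maximal: "\<not> (\<exists>B'. nice_blowup V E B' \<and> blowup_verts B \<subset> blowup_verts B')"
    and "x \<in> A3 V E B 0" "y \<in> A3 V E B 0" "E x y"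
  shows "nbhd_in E (B 0) x = nbhd_in E (B 0) y"
proof -
  have False if v: "v \<in> A3 V E B 0" and "w \<in> A3 V E B 0" "E v w" "u \<in> B 0" "E v u" "\<not> E w u" for v w u
  proof -
    have "\<forall>z\<in>B 0. E v z"
      using A3_complete_to_B0[OF that] by blast
    then have "nice_blowup V E (B(0 := insert v (B 0)))"
      by (rule nice_blowup_insert_A3[OF v])
    moreover have "blowup_verts B \<subset> blowup_verts (B(0 := insert v (B 0)))"
      using v unfolding A3_def by (simp add: blowup_verts_insert psubset_insert_iff)
    ultimately show False
      using maximal by blast
  qed
  then show ?thesis
    unfolding nbhd_in_def using assms(2-4) E_sym by blast
qed

end

theorem lemma8p3:
  fixes V :: "'a set" and E :: "'a \<Rightarrow> 'a \<Rightarrow> bool" and B :: "nat \<Rightarrow> 'a set"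
  assumes "graph V E"
    and "\<not> has_induced V E 7 path_adj"
    and "\<not> has_induced V E 4 (cycle_adj 4)"
    and "\<not> has_induced V E 6 (cycle_adj 6)"
    and "\<not> has_induced V E 7 (cycle_adj 7)"
    and "maximal_nice_blowup V E B"
    and "i < 5"
    and "x \<in> A3 V E B i" and "y \<in> A3 V E B i" and "E x y"
  shows "nbhd_in E (B i) x = nbhd_in E (B i) y"
proof -
  note rotate = C5_symmetry_rotate[of i]
  have maximal: "maximal_nice_blowup V E (B \<circ> (\<lambda>j. (j + i) mod 5))"
    by (rule maximal_nice_blowup_comp[OF rotate assms(1,6)])
  interpret nice_C5_blowup V E "B \<circ> (\<lambda>j. (j + i) mod 5)"
    using assms(1-5) maximal by unfold_locales (simp_all add: maximal_nice_blowup_def)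
  have "A3 V E (B \<circ> (\<lambda>j. (j + i) mod 5)) 0 = A3 V E B i" "(B \<circ> (\<lambda>j. (j + i) mod 5)) 0 = B i"
    using A3_comp[OF rotate, of 0] assms(7) by simp_all
  then show ?thesis
    using A3_nbhd_in_B0_eq maximal assms(8-10) unfolding maximal_nice_blowup_def by metis
qed

end
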